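(* Let $k\ge 1$ be an integer and $p\in[0,1]$. Let $I_1,\dots,I_k$ be independent random variables with $P(I_j=1)=p$, $P(I_j=0)=1-p$. Let $P@i=\frac1i\sum_{j=1}^i I_j$ and $AP@k=\frac1k\sum_{i=1}^k P@i\cdot I_i$. Then $$\operatorname{Var}(AP@k)=\frac5k\,p^3(1-p)+\frac{1}{k^2}\,p(1-p)\Big[p(1-2p)\big(3H_k+H_k^2\big)+(1-p)(1-3p)H_k^{(2)}\Big],$$ where $H_k=\sum_{i=1}^k\frac1i$ and $H_k^{(2)}=\sum_{i=1}^k\frac1{i^2}$.
   Context: This is the online evaluation model: each of the top-$k$ recommended items is relevant independently with probability $p$ ($I_j=1$ iff the item at position $j$ is relevant). *)

theory Defs
  imports "HOL-Probability.Probability"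
begin

definition prec_at :: "(nat \<Rightarrow> 'a \<Rightarrow> real) \<Rightarrow> nat \<Rightarrow> 'a \<Rightarrow> real" where
  "prec_at I i x = (1 / real i) * (\<Sum>j=1..i. I j x)"

definition avg_prec :: "(nat \<Rightarrow> 'a \<Rightarrow> real) \<Rightarrow> nat \<Rightarrow> 'a \<Rightarrow> real" where
  "avg_prec I k x = (1 / real k) * (\<Sum>i=1..k. prec_at I i x * I i x)"

definition harm2 :: "nat \<Rightarrow> real" where
  "harm2 k = (\<Sum>i=1..k. 1 / (real i)^2)"

end

theory Submission
  imports Defs
begin

(* Let S n be the number of relevant items among the first n and T n = n * AP@n.
   The pair (S n, T n) evolves as a Markov chain: with probability p, independently of the
   past, item n+1 is relevant and (s, t) moves to (s + 1, t + (s + 1) / (n + 1)); otherwise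
   it stays put.  Hence E f(S (n+1), T (n+1)) = E f(S n, T n) + p E[f(step) - f] for every f.
   Applied to the monomials S, S^2, T, T S and T^2 this is a closed triangular recursion for
   the five moments, solved in closed form by induction; finally Var AP@k = Var (T k) / k^2. *)

definition rel_count :: "(nat \<Rightarrow> real) \<Rightarrow> nat \<Rightarrow> real" where
  "rel_count w n = (\<Sum>j=1..n. w j)"

definition ap_sum :: "(nat \<Rightarrow> real) \<Rightarrow> nat \<Rightarrow> real" where
  "ap_sum w n = (\<Sum>i=1..n. rel_count w i * w i / real i)"

lemma rel_count_0 [simp]: "rel_count w 0 = 0"
  by (simp add: rel_count_def)

lemma ap_sum_0 [simp]: "ap_sum w 0 = 0"
  by (simp add: ap_sum_def)

lemma rel_count_Suc: "rel_count w (Suc n) = rel_count w n + w (Suc n)"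
  by (simp add: rel_count_def)

lemma ap_sum_Suc: "ap_sum w (Suc n) = ap_sum w n + rel_count w (Suc n) * w (Suc n) / real (Suc n)"
  by (simp add: ap_sum_def)

lemma rel_count_cong: "(\<And>j. j \<in> {1..n} \<Longrightarrow> w j = v j) \<Longrightarrow> rel_count w n = rel_count v n"
  unfolding rel_count_def by (rule sum.cong) auto

lemma ap_sum_cong: "(\<And>j. j \<in> {1..n} \<Longrightarrow> w j = v j) \<Longrightarrow> ap_sum w n = ap_sum v n"
  unfolding ap_sum_def using rel_count_cong[of _ w v] by (intro sum.cong) auto

lemma measurable_rel_count:
  "{1..n} \<subseteq> A \<Longrightarrow> (\<lambda>w. rel_count w n) \<in> borel_measurable (PiM A (\<lambda>_. borel))"
  unfolding rel_count_def by measurable auto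

lemma measurable_ap_sum:
  "{1..n} \<subseteq> A \<Longrightarrow> (\<lambda>w. ap_sum w n) \<in> borel_measurable (PiM A (\<lambda>_. borel))"
  unfolding ap_sum_def rel_count_def by measurable auto

lemma avg_prec_eq_ap_sum: "avg_prec I k x = ap_sum (\<lambda>j. I j x) k / real k"
  unfolding avg_prec_def ap_sum_def rel_count_def prec_at_def sum_divide_distrib sum_distrib_left
  by (intro sum.cong) (simp_all add: sum_divide_distrib[symmetric])

lemma (in finite_measure) integrable_finite_range:
  fixes f :: "'a \<Rightarrow> real"
  assumes "f \<in> borel_measurable M" and "finite (f ` space M)"
  shows "integrable M f"
  using assms by (intro integrable_const_bound[where B = "Max (abs ` f ` space M)"] AE_I2) auto

lemma (in prob_space) variance_cong_AE:
  fixes X Y :: "'a \<Rightarrow> real"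
  assumes "AE x in M. X x = Y x" and [measurable]: "X \<in> borel_measurable M" "Y \<in> borel_measurable M"
  shows "variance X = variance Y"
proof -
  have mean_eq: "expectation X = expectation Y"
    using assms(2,3,1) by (rule integral_cong_AE)
  show ?thesis
    unfolding mean_eq
  proof (rule integral_cong_AE)
    show "AE x in M. (X x - expectation Y)\<^sup>2 = (Y x - expectation Y)\<^sup>2"
      using assms(1) by (rule eventually_mono) simp
  qed measurable
qed

lemma (in prob_space) variance_divide:
  fixes X :: "'a \<Rightarrow> real"
  shows "variance (\<lambda>x. X x / c) = variance X / c^2"
  by (simp add: diff_divide_distrib[symmetric] power_divide)

lemma harm2_Suc: "harm2 (Suc n) = harm2 n + 1 / (real (Suc n))\<^sup>2"
  by (simp add: harm2_def)

definition ap_sum_variance :: "nat \<Rightarrow> real \<Rightarrow> real" where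
  "ap_sum_variance n p = 5 * real n * p^3 * (1 - p)
     + p * (1 - p) * (p * (1 - 2*p) * (3 * harm n + (harm n)\<^sup>2) + (1 - p) * (1 - 3*p) * harm2 n)"

locale bernoulli_relevance = prob_space +
  fixes I :: "nat \<Rightarrow> 'a \<Rightarrow> real" and k :: nat and p :: real
  assumes indep_I: "indep_vars (\<lambda>_. borel) I {1..k}"
    and prob_relevant: "\<And>j. j \<in> {1..k} \<Longrightarrow> prob {x \<in> space M. I j x = 1} = p"
    and prob_irrelevant: "\<And>j. j \<in> {1..k} \<Longrightarrow> prob {x \<in> space M. I j x = 0} = 1 - p"
begin

text \<open>The hypotheses make \<open>I\<close> 0/1-valued only almost surely.  \<open>rel\<close> is a version that is
  0/1-valued everywhere and vanishes outside \<open>{1..k}\<close>, so \<open>rel x\<close> ranges over a finite set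
  of sequences and every measurable function of it is integrable.\<close>

definition rel :: "'a \<Rightarrow> nat \<Rightarrow> real" where
  "rel x j = (if j \<in> {1..k} \<and> I j x = 1 then 1 else 0)"

abbreviation S :: "nat \<Rightarrow> 'a \<Rightarrow> real" where
  "S n x \<equiv> rel_count (rel x) n"

abbreviation T :: "nat \<Rightarrow> 'a \<Rightarrow> real" where
  "T n x \<equiv> ap_sum (rel x) n"

lemma measurable_I: "j \<in> {1..k} \<Longrightarrow> I j \<in> borel_measurable M"
  using indep_I by (auto simp: indep_vars_def)

lemma measurable_rel [measurable]: "(\<lambda>x. rel x j) \<in> borel_measurable M"
proof (cases "j \<in> {1..k}")
  case True
  note [measurable] = measurable_I[OF True]
  have "(\<lambda>x. if I j x = 1 then 1 else 0 :: real) \<in> borel_measurable M"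
    by measurable
  moreover have "(\<lambda>x. rel x j) = (\<lambda>x. if I j x = 1 then 1 else 0 :: real)"
    using True unfolding rel_def by (intro ext) presburger
  ultimately show ?thesis
    by (simp only:)
next
  case False
  then have "(\<lambda>x. rel x j) = (\<lambda>x. 0)"
    unfolding rel_def by (intro ext) presburger
  then show ?thesis
    by (simp only: borel_measurable_const)
qed

lemma rel_01: "rel x j = 0 \<or> rel x j = 1"
  by (simp add: rel_def)

lemma indep_rel: "indep_vars (\<lambda>_. borel) (\<lambda>j x. rel x j) {1..k}"
proof -
  have "indep_vars (\<lambda>_. borel) (\<lambda>j x. (\<lambda>t::real. if t = 1 then 1 else 0 :: real) (I j x)) {1..k}"
    (is "indep_vars _ ?J _")
    by (rule indep_vars_compose2[OF indep_I]) simp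
  also have "indep_vars (\<lambda>_. borel) ?J {1..k} \<longleftrightarrow> ?thesis"
    by (rule indep_vars_cong) (auto simp: rel_def fun_eq_iff)
  finally show ?thesis .
qed

lemma expectation_rel: "j \<in> {1..k} \<Longrightarrow> expectation (\<lambda>x. rel x j) = p"
proof -
  assume j: "j \<in> {1..k}"
  note [measurable] = measurable_I[OF j]
  have "expectation (\<lambda>x. rel x j) = expectation (indicator {x \<in> space M. I j x = 1})"
    using j by (intro Bochner_Integration.integral_cong) (auto simp: rel_def indicator_def)
  also have "\<dots> = p"
    using prob_relevant[OF j] by (simp add: Int_absorb2)
  finally show ?thesis .
qed

lemma AE_I_eq_rel: "AE x in M. \<forall>j\<in>{1..k}. I j x = rel x j"
proof (rule AE_finite_allI)
  fix j assume j: "j \<in> {1..k}"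
  note [measurable] = measurable_I[OF j]
  have "prob ({x \<in> space M. I j x = 1} \<union> {x \<in> space M. I j x = 0}) = 1"
    using prob_relevant[OF j] prob_irrelevant[OF j] by (subst finite_measure_Union) auto
  then have "AE x in M. x \<in> {x \<in> space M. I j x = 1} \<union> {x \<in> space M. I j x = 0}"
    by (rule AE_prob_1)
  then show "AE x in M. I j x = rel x j"
    by (rule eventually_mono) (use j in \<open>auto simp: rel_def\<close>)
qed simp

lemma finite_range_rel: "finite (range rel)"
proof (rule finite_subset)
  show "range rel \<subseteq> {w. \<forall>j. (j \<in> {1..k} \<longrightarrow> w j \<in> {0, 1}) \<and> (j \<notin> {1..k} \<longrightarrow> w j = 0)}"
    by (auto simp: rel_def)
qed (rule finite_set_of_finite_funs; simp)

lemma integrable_rel_fun: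
  fixes h :: "(nat \<Rightarrow> real) \<Rightarrow> real"
  assumes "(\<lambda>x. h (rel x)) \<in> borel_measurable M"
  shows "integrable M (\<lambda>x. h (rel x))"
proof (rule integrable_finite_range[OF assms])
  show "finite ((\<lambda>x. h (rel x)) ` space M)"
    using finite_range_rel by (rule finite_subset[rotated, OF finite_imageI]) auto
qed

lemma measurable_S: "(\<lambda>x. S n x) \<in> borel_measurable M"
  unfolding rel_count_def by measurable

lemma measurable_T: "(\<lambda>x. T n x) \<in> borel_measurable M"
  unfolding ap_sum_def rel_count_def by measurable

lemma measurable_state:
  fixes f :: "real \<times> real \<Rightarrow> real"
  assumes "f \<in> borel_measurable (borel \<Otimes>\<^sub>M borel)"
  shows "(\<lambda>x. f (S n x, T n x)) \<in> borel_measurable M"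
  using measurable_compose[OF measurable_Pair[OF measurable_S measurable_T] assms] .

lemma integrable_state:
  fixes f :: "real \<times> real \<Rightarrow> real"
  assumes "f \<in> borel_measurable (borel \<Otimes>\<^sub>M borel)"
  shows "integrable M (\<lambda>x. f (S n x, T n x))"
  using integrable_rel_fun[of "\<lambda>w. f (rel_count w n, ap_sum w n)"] measurable_state[OF assms]
  by blast

lemma expectation_mult_rel:
  fixes f :: "real \<times> real \<Rightarrow> real"
  assumes "Suc n \<le> k" and "f \<in> borel_measurable (borel \<Otimes>\<^sub>M borel)"
  shows "expectation (\<lambda>x. f (S n x, T n x) * rel x (Suc n)) = p * expectation (\<lambda>x. f (S n x, T n x))"
proof -
  define G where "G w = f (rel_count w n, ap_sum w n)" for w
  have "indep_var (PiM {1..n} (\<lambda>_. borel)) (\<lambda>x. restrict (rel x) {1..n})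
      (PiM {Suc n} (\<lambda>_. borel)) (\<lambda>x. restrict (rel x) {Suc n})"
    by (rule indep_var_restrict[OF indep_rel]) (use assms(1) in auto)
  then have "indep_var borel (G \<circ> (\<lambda>x. restrict (rel x) {1..n}))
      borel ((\<lambda>w. w (Suc n)) \<circ> (\<lambda>x. restrict (rel x) {Suc n}))"
  proof (rule indep_var_compose)
    show "G \<in> borel_measurable (PiM {1..n} (\<lambda>_. borel))"
      unfolding G_def[abs_def]
      using measurable_compose[OF measurable_Pair[OF measurable_rel_count[OF subset_refl]
          measurable_ap_sum[OF subset_refl]] assms(2)] .
  qed (rule measurable_component_singleton, simp)
  moreover have "G (restrict (rel x) {1..n}) = f (S n x, T n x)" for x
    using rel_count_cong[of n "restrict (rel x) {1..n}" "rel x"] ap_sum_cong[of n "restrict (rel x) {1..n}" "rel x"]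
    by (simp add: G_def)
  ultimately have "indep_var borel (\<lambda>x. f (S n x, T n x)) borel (\<lambda>x. rel x (Suc n))"
    by (simp add: comp_def)
  moreover have "integrable M (\<lambda>x. rel x (Suc n))"
    using integrable_rel_fun[of "\<lambda>w. w (Suc n)"] measurable_rel by blast
  ultimately have "expectation (\<lambda>x. f (S n x, T n x) * rel x (Suc n))
      = expectation (\<lambda>x. f (S n x, T n x)) * expectation (\<lambda>x. rel x (Suc n))"
    using integrable_state[OF assms(2)] by (intro indep_var_lebesgue_integral)
  also have "expectation (\<lambda>x. rel x (Suc n)) = p"
    using assms(1) by (intro expectation_rel) simp
  finally show ?thesis
    by (simp only: mult.commute)
qed

lemma expectation_Suc:
  fixes f :: "real \<times> real \<Rightarrow> real"
  assumes "Suc n \<le> k" and [measurable]: "f \<in> borel_measurable (borel \<Otimes>\<^sub>M borel)"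
  shows "expectation (\<lambda>x. f (S (Suc n) x, T (Suc n) x)) = expectation (\<lambda>x. f (S n x, T n x))
    + p * expectation (\<lambda>x. f (S n x + 1, T n x + (S n x + 1) / real (Suc n)) - f (S n x, T n x))"
proof -
  define g where "g z = f (fst z + 1, snd z + (fst z + 1) / real (Suc n)) - f z" for z
  have g_measurable: "g \<in> borel_measurable (borel \<Otimes>\<^sub>M borel)"
    unfolding g_def by measurable
  have "f (S (Suc n) x, T (Suc n) x) = f (S n x, T n x) + g (S n x, T n x) * rel x (Suc n)" for x
    using rel_01[of x "Suc n"] by (auto simp: g_def rel_count_Suc ap_sum_Suc)
  moreover have "integrable M (\<lambda>x. g (S n x, T n x) * rel x (Suc n))"
    using integrable_rel_fun[of "\<lambda>w. g (rel_count w n, ap_sum w n) * w (Suc n)"]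
      borel_measurable_times[OF measurable_state[OF g_measurable] measurable_rel] by blast
  ultimately have "expectation (\<lambda>x. f (S (Suc n) x, T (Suc n) x))
      = expectation (\<lambda>x. f (S n x, T n x)) + expectation (\<lambda>x. g (S n x, T n x) * rel x (Suc n))"
    using integrable_state[OF assms(2)] by simp
  also have "\<dots> = expectation (\<lambda>x. f (S n x, T n x)) + p * expectation (\<lambda>x. g (S n x, T n x))"
    using expectation_mult_rel[OF assms(1) g_measurable] by (simp only:)
  finally show ?thesis
    by (simp add: g_def)
qed

lemma integrable_moments [simp]:
  "integrable M (\<lambda>x. S n x)" "integrable M (\<lambda>x. (S n x)\<^sup>2)" "integrable M (\<lambda>x. T n x)"
  "integrable M (\<lambda>x. T n x * S n x)" "integrable M (\<lambda>x. (T n x)\<^sup>2)"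
proof -
  from integrable_state[OF measurable_fst] integrable_state[OF measurable_snd]
    integrable_state[OF borel_measurable_power[where n = 2, OF measurable_fst]]
    integrable_state[OF borel_measurable_times[OF measurable_snd measurable_fst]]
    integrable_state[OF borel_measurable_power[where n = 2, OF measurable_snd]]
  show "integrable M (\<lambda>x. S n x)" "integrable M (\<lambda>x. (S n x)\<^sup>2)" "integrable M (\<lambda>x. T n x)"
    "integrable M (\<lambda>x. T n x * S n x)" "integrable M (\<lambda>x. (T n x)\<^sup>2)"
    by simp_all
qed

lemma expectation_S: "n \<le> k \<Longrightarrow> expectation (\<lambda>x. S n x) = real n * p"
proof (induction n)
  case (Suc n)
  have "expectation (\<lambda>x. S (Suc n) x) = expectation (\<lambda>x. S n x) + p"
    using expectation_Suc[OF Suc.prems measurable_fst] by (simp add: prob_space)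
  with Suc show ?case
    by (simp add: algebra_simps)
qed simp

lemma expectation_S_sq: "n \<le> k \<Longrightarrow> expectation (\<lambda>x. (S n x)\<^sup>2) = real n * p * (1 - p) + (real n * p)\<^sup>2"
proof (induction n)
  case (Suc n)
  from expectation_Suc[OF Suc.prems borel_measurable_power[where n = 2, OF measurable_fst]]
  have "expectation (\<lambda>x. (S (Suc n) x)\<^sup>2) = expectation (\<lambda>x. (S n x)\<^sup>2) + p * (2 * expectation (\<lambda>x. S n x) + 1)"
    by (simp add: power2_sum algebra_simps prob_space)
  with Suc expectation_S[of n] show ?case
    by (simp add: algebra_simps power2_eq_square)
qed simp

lemma expectation_T: "n \<le> k \<Longrightarrow> expectation (\<lambda>x. T n x) = real n * p\<^sup>2 + p * (1 - p) * harm n"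
proof (induction n)
  case (Suc n)
  have "expectation (\<lambda>x. T (Suc n) x)
      = expectation (\<lambda>x. T n x) + p * (expectation (\<lambda>x. S n x) + 1) / real (Suc n)"
    using expectation_Suc[OF Suc.prems measurable_snd] by (simp add: prob_space)
  also have "\<dots> = real n * p\<^sup>2 + p * (1 - p) * harm n + p * (real n * p + 1) / (real n + 1)"
    using Suc by (simp add: expectation_S)
  finally show ?case
    by (simp add: harm_Suc field_simps power2_eq_square)
qed (simp add: harm_expand(1))

lemma expectation_T_S:
  "n \<le> k \<Longrightarrow> expectation (\<lambda>x. T n x * S n x) =
    harm n * (p + (real n - 3) * p^2 - (real n - 2) * p^3) + real n * (2 * p^2 + (real n - 2) * p^3)"
proof (induction n)
  case (Suc n)
  have "expectation (\<lambda>x. T (Suc n) x * S (Suc n) x) = expectation (\<lambda>x. T n x * S n x)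
      + p * expectation (\<lambda>x. (T n x + (S n x + 1) / real (Suc n)) * (S n x + 1) - T n x * S n x)"
    using expectation_Suc[OF Suc.prems borel_measurable_times[OF measurable_snd measurable_fst]]
    by (simp only: fst_conv snd_conv)
  also have "(\<lambda>x. (T n x + (S n x + 1) / real (Suc n)) * (S n x + 1) - T n x * S n x)
      = (\<lambda>x. T n x + ((S n x)\<^sup>2 + 2 * S n x + 1) / real (Suc n))"
    by (simp add: fun_eq_iff power2_eq_square algebra_simps add_divide_distrib)
  also have "expectation (\<lambda>x. T n x * S n x) + p * expectation \<dots>
      = harm n * (p + (real n - 3) * p^2 - (real n - 2) * p^3) + real n * (2 * p^2 + (real n - 2) * p^3)
        + p * (real n * p\<^sup>2 + p * (1 - p) * harm n
          + (real n * p * (1 - p) + (real n * p)\<^sup>2 + 2 * (real n * p) + 1) / (real n + 1))"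
    using Suc by (simp add: expectation_S expectation_S_sq expectation_T prob_space)
  finally show ?case
    by (simp add: harm_Suc field_simps power2_eq_square power3_eq_cube)
qed (simp add: harm_expand(1))

lemma expectation_T_sq:
  "n \<le> k \<Longrightarrow> expectation (\<lambda>x. (T n x)\<^sup>2) = (real n * p\<^sup>2 + p * (1 - p) * harm n)\<^sup>2 + ap_sum_variance n p"
proof (induction n)
  case (Suc n)
  have "expectation (\<lambda>x. (T (Suc n) x)\<^sup>2) = expectation (\<lambda>x. (T n x)\<^sup>2)
      + p * expectation (\<lambda>x. (T n x + (S n x + 1) / real (Suc n))\<^sup>2 - (T n x)\<^sup>2)"
    using expectation_Suc[OF Suc.prems borel_measurable_power[where n = 2, OF measurable_snd]]
    by (simp only: fst_conv snd_conv)
  also have "(\<lambda>x. (T n x + (S n x + 1) / real (Suc n))\<^sup>2 - (T n x)\<^sup>2)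
      = (\<lambda>x. 2 * (T n x * S n x + T n x) / real (Suc n) + ((S n x)\<^sup>2 + 2 * S n x + 1) / (real (Suc n))\<^sup>2)"
  proof -
    have "(t + (s + 1) / m)\<^sup>2 - t\<^sup>2 = 2 * (t * s + t) / m + (s\<^sup>2 + 2 * s + 1) / m\<^sup>2"
      if "m \<noteq> 0" for t s m :: real
      using that by (simp add: field_simps power2_eq_square)
    then show ?thesis
      by simp
  qed
  also have "expectation (\<lambda>x. (T n x)\<^sup>2) + p * expectation \<dots>
      = (real n * p\<^sup>2 + p * (1 - p) * harm n)\<^sup>2 + ap_sum_variance n p
        + p * (2 * (harm n * (p + (real n - 3) * p^2 - (real n - 2) * p^3) + real n * (2 * p^2 + (real n - 2) * p^3)
              + real n * p\<^sup>2 + p * (1 - p) * harm n) / (1 + real n)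
          + (real n * p * (1 - p) + (real n * p)\<^sup>2 + 2 * (real n * p) + 1) / (1 + real n)\<^sup>2)"
    using Suc by (simp add: expectation_S expectation_S_sq expectation_T expectation_T_S prob_space)
  also have "\<dots> = (real (Suc n) * p\<^sup>2 + p * (1 - p) * harm (Suc n))\<^sup>2 + ap_sum_variance (Suc n) p"
  proof -
    define m where "m = 1 + real n"
    have "m \<noteq> 0" and n_eq: "real n = m - 1"
      by (simp_all add: m_def)
    show ?thesis
      unfolding ap_sum_variance_def harm_Suc harm2_Suc of_nat_Suc m_def[symmetric] n_eq
      using \<open>m \<noteq> 0\<close> by (simp add: field_simps power2_eq_square power3_eq_cube)
  qed
  finally show ?case .
qed (simp add: ap_sum_variance_def harm_expand(1) harm2_def)

lemma variance_T: "n \<le> k \<Longrightarrow> variance (T n) = ap_sum_variance n p"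
  using variance_eq[of "T n"] by (simp add: expectation_T expectation_T_sq)

lemma variance_avg_prec: "variance (avg_prec I k) = ap_sum_variance k p / (real k)\<^sup>2"
proof -
  have "avg_prec I k x = T k x / real k" if "\<forall>j\<in>{1..k}. I j x = rel x j" for x
    unfolding avg_prec_eq_ap_sum using that by (metis ap_sum_cong)
  then have "AE x in M. avg_prec I k x = T k x / real k"
    using AE_I_eq_rel by (auto elim: eventually_mono)
  moreover have "avg_prec I k \<in> borel_measurable M"
    unfolding avg_prec_def[abs_def] prec_at_def
    by (intro borel_measurable_times borel_measurable_sum borel_measurable_const measurable_I) auto
  moreover have "(\<lambda>x. T k x / real k) \<in> borel_measurable M"
    using measurable_T borel_measurable_const by (rule borel_measurable_divide)
  ultimately have "variance (avg_prec I k) = variance (\<lambda>x. T k x / real k)"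
    by (rule variance_cong_AE)
  also have "\<dots> = variance (T k) / (real k)\<^sup>2"
    by (rule variance_divide)
  finally show ?thesis
    by (simp only: variance_T[OF order_refl])
qed

end

theorem theorem4:
  fixes M :: "'a measure" and I :: "nat \<Rightarrow> 'a \<Rightarrow> real" and k :: nat and p :: real
  assumes "prob_space M"
    and "k \<ge> 1"
    and "0 \<le> p" and "p \<le> 1"
    and "prob_space.indep_vars M (\<lambda>_. borel) I {1..k}"
    and "\<And>j. j \<in> {1..k} \<Longrightarrow> measure M {x \<in> space M. I j x = 1} = p"
    and "\<And>j. j \<in> {1..k} \<Longrightarrow> measure M {x \<in> space M. I j x = 0} = 1 - p"
  shows "prob_space.variance M (avg_prec I k) =
           5 / real k * p^3 * (1 - p)
         + 1 / (real k)^2 * p * (1 - p) *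
             (p * (1 - 2*p) * (3 * harm k + (harm k)^2) + (1 - p) * (1 - 3*p) * harm2 k)"
proof -
  interpret bernoulli_relevance M I k p
    using assms(1) bernoulli_relevance_axioms.intro[OF assms(5-7)] by (rule bernoulli_relevance.intro)
  have "real k \<noteq> 0"
    using assms(2) by simp
  then show ?thesis
    unfolding variance_avg_prec ap_sum_variance_def by (simp add: field_simps power2_eq_square)
qed

end
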